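(* Let $G_8$ be the graph obtained by identifying one vertex of a $4$-cycle with one vertex of another (disjoint) $4$-cycle; i.e., $G_8$ has vertices $v_1,\ldots,v_7$ and edges $v_1v_2, v_2v_3, v_3v_7, v_7v_1, v_3v_4, v_4v_5, v_5v_6, v_6v_3$. Then $G_8$ is a partial cube that is not $\Theta$-graceful, i.e., $G_8$ admits no $\Theta$-graceful labeling.
   Context: A subgraph $H$ of a graph $G$ is isometric if $d_H(u,v)=d_G(u,v)$ for all vertices $u,v$ of $H$, where $d$ is shortest-path distance. A partial cube is a graph isomorphic to an isometric subgraph of some hypercube. The Djoković–Winkler relation $\Theta$ on the edges of $G$: edges $xy$ and $uv$ satisfy $xy\,\Theta\,uv$ iff $d(x,u)+d(y,v)\neq d(x,v)+d(y,u)$. On a partial cube $\Theta$ is an equivalence relation; its classes are called $\Theta$-classes. For a partial cube $G$ on $n$ vertices, a bijection $f:V(G)\to\{0,1,\ldots,n-1\}$ is a $\Theta$-graceful labeling if, labeling each edge $xy$ by $|f(x)-f(y)|$, all edges in the same $\Theta$-class receive the same label and distinct $\Theta$-classes receive distinct labels. A partial cube admitting such a labeling is called $\Theta$-graceful. *)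

theory Defs
  imports Main
begin

definition is_graph :: "'a set \<Rightarrow> ('a \<Rightarrow> 'a \<Rightarrow> bool) \<Rightarrow> bool" where
  "is_graph V adj \<longleftrightarrow> (\<forall>x y. adj x y \<longrightarrow> x \<in> V \<and> y \<in> V \<and> x \<noteq> y \<and> adj y x)"

definition is_walk :: "('a \<Rightarrow> 'a \<Rightarrow> bool) \<Rightarrow> 'a list \<Rightarrow> bool" where
  "is_walk adj p \<longleftrightarrow> p \<noteq> [] \<and> (\<forall>i. Suc i < length p \<longrightarrow> adj (p ! i) (p ! Suc i))"

definition gdist :: "('a \<Rightarrow> 'a \<Rightarrow> bool) \<Rightarrow> 'a \<Rightarrow> 'a \<Rightarrow> nat" where
  "gdist adj x y = (LEAST k. \<exists>p. is_walk adj p \<and> length p = Suc k \<and> hd p = x \<and> last p = y)"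

definition hypercube_V :: "nat \<Rightarrow> nat set set" where
  "hypercube_V n = Pow {..<n}"

definition hypercube_adj :: "nat \<Rightarrow> nat set \<Rightarrow> nat set \<Rightarrow> bool" where
  "hypercube_adj n S T \<longleftrightarrow> S \<in> hypercube_V n \<and> T \<in> hypercube_V n \<and> card ((S - T) \<union> (T - S)) = 1"

text \<open>Partial cube: isomorphic (via f) to an isometric subgraph H of some hypercube,
where H has vertex set f ` V and edges the images of edges of G.\<close>
definition partial_cube :: "'a set \<Rightarrow> ('a \<Rightarrow> 'a \<Rightarrow> bool) \<Rightarrow> bool" where
  "partial_cube V adj \<longleftrightarrow> is_graph V adj \<and>
     (\<exists>n (f :: 'a \<Rightarrow> nat set).
        inj_on f V \<and> f ` V \<subseteq> hypercube_V n \<and>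
        (\<forall>x y. adj x y \<longrightarrow> hypercube_adj n (f x) (f y)) \<and>
        (\<forall>u\<in>V. \<forall>v\<in>V. gdist adj u v = gdist (hypercube_adj n) (f u) (f v)))"

definition Theta :: "('a \<Rightarrow> 'a \<Rightarrow> bool) \<Rightarrow> 'a \<Rightarrow> 'a \<Rightarrow> 'a \<Rightarrow> 'a \<Rightarrow> bool" where
  "Theta adj x y u v \<longleftrightarrow>
     gdist adj x u + gdist adj y v \<noteq> gdist adj x v + gdist adj y u"

definition theta_graceful_labeling :: "'a set \<Rightarrow> ('a \<Rightarrow> 'a \<Rightarrow> bool) \<Rightarrow> ('a \<Rightarrow> nat) \<Rightarrow> bool" where
  "theta_graceful_labeling V adj f \<longleftrightarrow> bij_betw f V {..<card V} \<and>
     (\<forall>x y u v. adj x y \<longrightarrow> adj u v \<longrightarrow>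
        (Theta adj x y u v \<longleftrightarrow> \<bar>int (f x) - int (f y)\<bar> = \<bar>int (f u) - int (f v)\<bar>))"

definition theta_graceful :: "'a set \<Rightarrow> ('a \<Rightarrow> 'a \<Rightarrow> bool) \<Rightarrow> bool" where
  "theta_graceful V adj \<longleftrightarrow> partial_cube V adj \<and> (\<exists>f. theta_graceful_labeling V adj f)"

definition G8_V :: "nat set" where
  "G8_V = {1,2,3,4,5,6,7}"

definition G8_E :: "(nat \<times> nat) set" where
  "G8_E = {(1,2),(2,3),(3,7),(7,1),(3,4),(4,5),(5,6),(6,3)}"

definition G8_adj :: "nat \<Rightarrow> nat \<Rightarrow> bool" where
  "G8_adj x y \<longleftrightarrow> (x, y) \<in> G8_E \<or> (y, x) \<in> G8_E"

end

theory Submission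
  imports Defs
begin

text \<open>\<open>G8\<close> embeds isometrically into the 4-cube with the cut vertex 3 at the origin; graph
distances are certified by a potential that drops by one along a suitable edge and by at most
one along every edge. The four \<open>\<Theta>\<close>-classes are the pairs of opposite edges of the two squares.

In a \<open>\<Theta>\<close>-graceful labeling \<open>a\<close>, equal labels on opposite sides of a square, and distinct labels
on adjacent sides, force equal diagonal sums: \<open>a\<^sub>1 + a\<^sub>3 = a\<^sub>2 + a\<^sub>7\<close> and
\<open>a\<^sub>3 + a\<^sub>5 = a\<^sub>4 + a\<^sub>6\<close>. Together with \<open>a\<^sub>1 + \<dots> + a\<^sub>7 = 0 + \<dots> + 6 = 21\<close> this gives
\<open>2 (a\<^sub>1 + a\<^sub>5) + 3 a\<^sub>3 = 21\<close>, so \<open>a\<^sub>3 \<in> {1, 3, 5}\<close>. The four edges at vertex 3 lie in distinct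
\<open>\<Theta>\<close>-classes, so the labels of its neighbours lie at pairwise distinct distances from \<open>a\<^sub>3\<close>.
For \<open>a\<^sub>3 = 3\<close> only the distances 1, 2, 3 are available; for \<open>a\<^sub>3 = 1\<close> (resp. 5) we get
\<open>a\<^sub>1 + a\<^sub>5 = 9\<close> (resp. 3), which forces both 0 and 2 (resp. 4 and 6) onto neighbours of 3,
both at distance 1.\<close>

lemma is_walk_ConsD:
  assumes "is_walk adj (a # q)" "q \<noteq> []"
  shows "is_walk adj q" "adj a (hd q)"
proof -
  have "adj ((a # q) ! 0) ((a # q) ! Suc 0)"
    using assms unfolding is_walk_def by auto
  then show "adj a (hd q)"
    using assms(2) by (cases q) auto
  show "is_walk adj q"
    using assms unfolding is_walk_def by force
qed

lemma is_walk_Cons: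
  assumes "is_walk adj q" "adj a (hd q)"
  shows "is_walk adj (a # q)"
  using assms unfolding is_walk_def by (auto simp: nth_Cons hd_conv_nth split: nat.split)

lemma walk_length_lower_bound:
  assumes zero: "\<And>x. D x x = 0"
    and lipschitz: "\<And>x y. adj x y \<Longrightarrow> D x z \<le> D y z + 1"
    and "is_walk adj p" "last p = z"
  shows "D (hd p) z \<le> length p - 1"
  using assms(3,4)
proof (induction p)
  case Nil
  then show ?case by (simp add: is_walk_def)
next
  case (Cons a q)
  show ?case
  proof (cases "q = []")
    case True
    then show ?thesis using Cons.prems zero by simp
  next
    case False
    note walk = is_walk_ConsD[OF Cons.prems(1) False]
    have "D (hd q) z \<le> length q - 1"
      using Cons.IH walk(1) Cons.prems(2) False by simp
    moreover have "D a z \<le> D (hd q) z + 1"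
      using lipschitz[OF walk(2)] .
    ultimately show ?thesis using False by (cases q) auto
  qed
qed

lemma descending_walk_exists:
  assumes zero: "\<And>x. D x x = 0"
    and descent: "\<And>x. x \<in> W \<Longrightarrow> x \<noteq> z \<Longrightarrow> \<exists>y\<in>W. adj x y \<and> D x z = Suc (D y z)"
    and "x \<in> W"
  shows "\<exists>p. is_walk adj p \<and> length p = Suc (D x z) \<and> hd p = x \<and> last p = z"
  using assms(3)
proof (induction "D x z" arbitrary: x)
  case 0
  have "x = z"
    using descent[OF 0(2)] 0(1) by (metis nat.distinct(1))
  then show ?case
    by (intro exI[of _ "[x]"]) (simp add: is_walk_def zero)
next
  case (Suc n)
  have "x \<noteq> z"
    using Suc.hyps(2) zero by (metis nat.distinct(1))
  then obtain y where y: "adj x y" "y \<in> W" "D x z = Suc (D y z)"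
    using descent Suc.prems by blast
  then obtain p where p: "is_walk adj p" "length p = Suc (D y z)" "hd p = y" "last p = z"
    using Suc.hyps by auto
  then have "p \<noteq> []" by auto
  with p y show ?case
    by (intro exI[of _ "x # p"]) (simp add: is_walk_Cons)
qed

lemma gdist_eqI:
  assumes "\<And>x. D x x = 0"
    and "\<And>x y. adj x y \<Longrightarrow> D x z \<le> D y z + 1"
    and "\<And>x. x \<in> W \<Longrightarrow> x \<noteq> z \<Longrightarrow> \<exists>y\<in>W. adj x y \<and> D x z = Suc (D y z)"
    and "x \<in> W"
  shows "gdist adj x z = D x z"
  unfolding gdist_def
proof (rule Least_equality)
  show "\<exists>p. is_walk adj p \<and> length p = Suc (D x z) \<and> hd p = x \<and> last p = z"
    by (rule descending_walk_exists[OF assms(1,3,4)])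
next
  fix k
  assume "\<exists>p. is_walk adj p \<and> length p = Suc k \<and> hd p = x \<and> last p = z"
  then show "D x z \<le> k"
    using walk_length_lower_bound[where D = D and adj = adj and z = z, OF assms(1,2)] by fastforce
qed

definition hamming :: "'a set \<Rightarrow> 'a set \<Rightarrow> nat" where
  "hamming S T = card (sym_diff S T)"

lemma hamming_triangle:
  assumes "finite S" "finite T" "finite U"
  shows "hamming S U \<le> hamming S T + hamming T U"
proof -
  have "hamming S U \<le> card (sym_diff S T \<union> sym_diff T U)"
    unfolding hamming_def using assms by (intro card_mono) auto
  also have "\<dots> \<le> hamming S T + hamming T U"
    unfolding hamming_def by (rule card_Un_le)
  finally show ?thesis .
qed

lemma gdist_hypercube:
  assumes "T \<in> hypercube_V n" "S \<in> hypercube_V n"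
  shows "gdist (hypercube_adj n) S T = hamming S T"
proof (rule gdist_eqI[where W = "hypercube_V n"])
  fix S' U
  assume "hypercube_adj n S' U"
  then show "hamming S' T \<le> hamming U T + 1"
    using hamming_triangle[of S' U T] assms(1)
    by (auto simp: hypercube_adj_def hamming_def hypercube_V_def intro: finite_subset)
next
  fix S'
  assume S': "S' \<in> hypercube_V n" "S' \<noteq> T"
  then obtain e where e: "e \<in> sym_diff S' T" by blast
  define U where "U = (if e \<in> S' then S' - {e} else insert e S')"
  have U: "U \<in> hypercube_V n"
    using S' e assms(1) by (auto simp: U_def hypercube_V_def)
  have "sym_diff S' U = {e}" by (auto simp: U_def)
  then have "hypercube_adj n S' U"
    using S'(1) U by (simp add: hypercube_adj_def)
  moreover have "sym_diff S' T = insert e (sym_diff U T)"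
    and "e \<notin> sym_diff U T"
    using e by (auto simp: U_def)
  moreover have "finite (sym_diff U T)"
    using U assms(1) by (auto simp: hypercube_V_def intro: finite_subset)
  ultimately show "\<exists>U\<in>hypercube_V n. hypercube_adj n S' U \<and> hamming S' T = Suc (hamming U T)"
    using U by (auto simp: hamming_def)
qed (use assms in \<open>simp_all add: hamming_def\<close>)

definition G8_code :: "nat \<Rightarrow> nat set" where
  "G8_code v =
     (if v = 1 then {0, 1} else if v = 2 then {0} else if v = 7 then {1}
      else if v = 4 then {2} else if v = 6 then {3} else if v = 5 then {2, 3} else {})"

lemma G8_adj_iff:
  "G8_adj x y \<longleftrightarrow> (x, y) \<in> {(1,2), (2,3), (3,7), (7,1), (3,4), (4,5), (5,6), (6,3),
                             (2,1), (3,2), (7,3), (1,7), (4,3), (5,4), (6,5), (3,6)}"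
  unfolding G8_adj_def G8_E_def by auto

lemma G8_code_hamming_adj_le:
  assumes "G8_adj u v" "y \<in> G8_V"
  shows "hamming (G8_code u) (G8_code y) \<le> hamming (G8_code v) (G8_code y) + 1"
proof -
  have "(u, v) \<in> {(1,2), (2,3), (3,7), (7,1), (3,4), (4,5), (5,6), (6,3),
                   (2,1), (3,2), (7,3), (1,7), (4,3), (5,4), (6,5), (3,6)}"
    using assms(1) by (simp add: G8_adj_iff)
  moreover have "y \<in> {1, 2, 3, 4, 5, 6, 7}"
    using assms(2) by (simp add: G8_V_def)
  ultimately show ?thesis
    by (elim insertE emptyE; simp add: G8_code_def hamming_def)
qed

lemma G8_code_hamming_descent:
  assumes "u \<in> G8_V" "y \<in> G8_V" "u \<noteq> y"
  shows "\<exists>v\<in>G8_V. G8_adj u v \<and>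
             hamming (G8_code u) (G8_code y) = Suc (hamming (G8_code v) (G8_code y))"
  using assms unfolding G8_V_def
  by (elim insertE emptyE; simp add: G8_adj_iff G8_code_def hamming_def)

lemma gdist_G8:
  assumes "x \<in> G8_V" "y \<in> G8_V"
  shows "gdist G8_adj x y = hamming (G8_code x) (G8_code y)"
  using G8_code_hamming_adj_le G8_code_hamming_descent assms
  by (intro gdist_eqI[where W = G8_V]) (auto simp: hamming_def)

lemma Theta_G8_iff:
  assumes "x \<in> G8_V" "y \<in> G8_V" "u \<in> G8_V" "v \<in> G8_V"
  shows "Theta G8_adj x y u v \<longleftrightarrow>
    hamming (G8_code x) (G8_code u) + hamming (G8_code y) (G8_code v) \<noteq>
    hamming (G8_code x) (G8_code v) + hamming (G8_code y) (G8_code u)"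
  using assms by (simp add: Theta_def gdist_G8)

lemma G8_is_graph: "is_graph G8_V G8_adj"
  unfolding is_graph_def G8_adj_iff G8_V_def by auto

lemma inj_on_G8_code: "inj_on G8_code G8_V"
  by (simp add: inj_on_def G8_V_def G8_code_def doubleton_eq_iff)

lemma G8_code_hypercube: "G8_code ` G8_V \<subseteq> hypercube_V 4"
  by (simp add: G8_V_def G8_code_def hypercube_V_def)

lemma G8_adj_hypercube_adj:
  assumes "G8_adj x y"
  shows "hypercube_adj 4 (G8_code x) (G8_code y)"
  using assms unfolding G8_adj_iff
  by (elim insertE emptyE; simp add: hypercube_adj_def hypercube_V_def G8_code_def)

lemma partial_cube_G8: "partial_cube G8_V G8_adj"
  unfolding partial_cube_def
proof (intro conjI exI[of _ 4] exI[of _ G8_code] ballI allI impI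
    G8_is_graph inj_on_G8_code G8_code_hypercube G8_adj_hypercube_adj)
  show "gdist G8_adj u v = gdist (hypercube_adj 4) (G8_code u) (G8_code v)"
    if "u \<in> G8_V" "v \<in> G8_V" for u v
    using that G8_code_hypercube by (simp add: gdist_G8 gdist_hypercube image_subset_iff)
qed

lemma square_label_sums:
  fixes a b c d :: int
  assumes "\<bar>a - b\<bar> = \<bar>c - d\<bar>" "\<bar>b - c\<bar> = \<bar>d - a\<bar>" "\<bar>a - b\<bar> \<noteq> \<bar>b - c\<bar>"
  shows "a + c = b + d"
  using assms by (auto simp: abs_if split: if_splits)

lemma theta_graceful_labeling_square:
  assumes "theta_graceful_labeling V adj f"
    and "adj x y" "adj y u" "adj u v" "adj v x"
    and "Theta adj x y u v" "Theta adj y u v x" "\<not> Theta adj x y y u"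
  shows "int (f x) + int (f u) = int (f y) + int (f v)"
  using assms unfolding theta_graceful_labeling_def by (intro square_label_sums) blast+

lemma theta_graceful_labeling_distinct_labels:
  assumes "theta_graceful_labeling V adj f" "adj x y" "adj u v" "\<not> Theta adj x y u v"
  shows "\<bar>int (f x) - int (f y)\<bar> \<noteq> \<bar>int (f u) - int (f v)\<bar>"
  using assms unfolding theta_graceful_labeling_def by blast

lemma G8_label_constraints_inconsistent:
  fixes c p q w x y z :: int
  assumes labels: "{c, p, q, w, x, y, z} = {0..6}"
    and distinct: "distinct [c, p, q, w, x, y, z]"
    and squares: "p + c = w + x" "c + q = y + z"
    and cut: "distinct [\<bar>c - w\<bar>, \<bar>c - x\<bar>, \<bar>c - y\<bar>, \<bar>c - z\<bar>]"
  shows False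
proof -
  have "sum_list [c, p, q, w, x, y, z] = \<Sum>{0..6::int}"
    using distinct_sum_list_conv_Sum[OF distinct] labels by simp
  also have "{0..6::int} = {0, 1, 2, 3, 4, 5, 6}" by auto
  finally have sum: "2 * (p + q) + 3 * c = 21"
    using squares by simp
  have range: "\<forall>v\<in>{c, p, q, w, x, y, z}. 0 \<le> v \<and> v \<le> 6"
    using labels by auto
  have far_label_next_to_c: "c - 1 \<in> {p, q} \<or> c + 1 \<in> {p, q}" if "0 < c" "c < 6"
  proof (rule ccontr)
    assume "\<not> ?thesis"
    moreover have "c - 1 \<in> {c, p, q, w, x, y, z}" "c + 1 \<in> {c, p, q, w, x, y, z}"
      unfolding labels using that by simp_all
    ultimately have "c - 1 \<in> {w, x, y, z}" "c + 1 \<in> {w, x, y, z}"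
      by auto
    then show False using cut by auto
  qed
  have "0 \<le> c" "c \<le> 6"
    using range by simp_all
  then have "c = 1 \<or> c = 3 \<or> c = 5"
    using sum by presburger
  then consider "c = 1" | "c = 3" | "c = 5"
    by blast
  then show False
  proof cases
    case 1
    then have "p + q = 9" using sum by simp
    then show False using far_label_next_to_c 1 range by auto
  next
    case 2
    have "\<bar>3 - v\<bar> \<in> {1, 2, 3}" if "0 \<le> v" "v \<le> 6" "v \<noteq> 3" for v :: int
      using that by (auto simp: abs_if)
    then have "set [\<bar>c - w\<bar>, \<bar>c - x\<bar>, \<bar>c - y\<bar>, \<bar>c - z\<bar>] \<subseteq> {1, 2, 3}"
      using 2 range distinct by simp
    from card_mono[OF _ this] show False
      using distinct_card[OF cut] by simp
  next
    case 3
    then have "p + q = 3" using sum by simp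
    then show False using far_label_next_to_c 3 range by auto
  qed
qed

lemma G8_no_theta_graceful_labeling: "\<not> theta_graceful_labeling G8_V G8_adj f"
proof
  assume graceful: "theta_graceful_labeling G8_V G8_adj f"
  define a where "a v = int (f v)" for v
  have "card G8_V = 7"
    by (simp add: G8_V_def)
  then have bij: "bij_betw f G8_V {..<7}"
    using graceful by (simp add: theta_graceful_labeling_def)
  note G8_eval = G8_adj_iff Theta_G8_iff G8_V_def G8_code_def hamming_def
  have square_left: "a 1 + a 3 = a 2 + a 7"
    unfolding a_def by (rule theta_graceful_labeling_square[OF graceful]) (simp_all add: G8_eval)
  have square_right: "a 3 + a 5 = a 4 + a 6"
    unfolding a_def by (rule theta_graceful_labeling_square[OF graceful]) (simp_all add: G8_eval)
  have cut: "distinct [\<bar>a 3 - a 2\<bar>, \<bar>a 3 - a 7\<bar>, \<bar>a 3 - a 4\<bar>, \<bar>a 3 - a 6\<bar>]"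
    unfolding a_def by (simp add: theta_graceful_labeling_distinct_labels[OF graceful] G8_eval)
  have "a ` G8_V = int ` f ` G8_V"
    by (simp add: a_def image_image)
  also have "\<dots> = int ` {0..<7}"
    using bij by (simp add: bij_betw_def lessThan_atLeast0)
  also have "\<dots> = {0..6}"
    by (simp add: image_int_atLeastLessThan) auto
  finally have labels: "{a 3, a 1, a 5, a 2, a 7, a 4, a 6} = {0..6}"
    by (simp add: G8_V_def insert_commute)
  have "inj_on a G8_V"
    using bij by (simp add: a_def bij_betw_def inj_on_def)
  moreover have "set [3, 1, 5, 2, 7, 4, 6] = G8_V"
    by (auto simp: G8_V_def)
  ultimately have "distinct (map a [3, 1, 5, 2, 7, 4, 6])"
    by (subst distinct_map) simp
  from G8_label_constraints_inconsistent[OF labels this[unfolded list.map]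
      square_left square_right cut]
  show False .
qed

theorem theorem2:
  shows "partial_cube G8_V G8_adj \<and> \<not> (\<exists>f. theta_graceful_labeling G8_V G8_adj f)"
  using partial_cube_G8 G8_no_theta_graceful_labeling by blast

end
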